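(* Among the intervals in $\mathcal{M}_\alpha$, the fiducial interval minimizes the expected length for all $\theta\in\Theta$ as well as the length for all $x\in\mathcal{X}$.
   Context: $\Theta$ is a connected open subset of $\mathbb{R}$, $\mathcal{X}\subseteq\mathbb{Z}$ consists of consecutive integers, $\mathrm{P}_\theta$ denotes probability under $P_\theta$, satisfying (A1) $\mathrm{P}_\theta(X=x)>0$ for all $(\theta,x)$; (A2) $\mathrm{P}_\theta(X\leq x)$ strictly decreasing in $\theta$ for each fixed $x\in\mathcal{X}\backslash\sup\mathcal{X}$; (A3) $\mathrm{P}_\theta(X=x)$ differentiable in $\theta$. $\mathcal{M}_\alpha$ is the class of confidence intervals $(L_{\alpha/2}(x),U_{\alpha/2}(x))$ satisfying (D1) $L_{\alpha/2}(x)\leq L_{\alpha/2}(x+1)$ and $U_{\alpha/2}(x)\leq U_{\alpha/2}(x+1)$; (D2) $\inf_{\theta}\mathrm{P}_\theta(L_{\alpha/2}(X)\leq\theta)\geq 1-\alpha/2$ and $\inf_\theta\mathrm{P}_\theta(U_{\alpha/2}(X)\geq\theta)\geq 1-\alpha/2$; (D3) the interval only depends on $x$, $\alpha$ and $P_\theta$. The fiducial interval is $(\theta_L,\theta_U)$ with $\sum_{k\leq x}\mathrm{P}_{\theta_L}(X=k)=\alpha/2$ and $\sum_{k\geq x}\mathrm{P}_{\theta_U}(X=k)=\alpha/2$. Length is $U_{\alpha/2}(x)-L_{\alpha/2}(x)$; expected length is $\sum_k\mathrm{P}_\theta(X=k)(U_{\alpha/2}(k)-L_{\alpha/2}(k))$.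 *)

theory Defs
  imports "HOL-Analysis.Analysis" "HOL-Probability.Probability"
begin

definition consecutive_ints :: "int set \<Rightarrow> bool" where
  "consecutive_ints S \<longleftrightarrow> S \<noteq> {} \<and> (\<forall>a\<in>S. \<forall>b\<in>S. {a..b} \<subseteq> S)"

definition model_assumptions :: "real set \<Rightarrow> int set \<Rightarrow> (real \<Rightarrow> int pmf) \<Rightarrow> bool" where
  "model_assumptions \<Theta> \<X> P \<longleftrightarrow>
     open \<Theta> \<and> connected \<Theta> \<and> \<Theta> \<noteq> {} \<and> consecutive_ints \<X> \<and>
     \<comment> \<open>the support of every P_theta is X, and (A1) P_theta(X = x) > 0 on X\<close>
     (\<forall>\<theta>\<in>\<Theta>. set_pmf (P \<theta>) \<subseteq> \<X>) \<and>
     (\<forall>\<theta>\<in>\<Theta>. \<forall>x\<in>\<X>. pmf (P \<theta>) x > 0) \<and>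
     \<comment> \<open>(A2) P_theta(X <= x) strictly decreasing in theta, for x in X other than sup X\<close>
     (\<forall>x\<in>\<X>. (\<exists>y\<in>\<X>. x < y) \<longrightarrow>
        (\<forall>\<theta>1\<in>\<Theta>. \<forall>\<theta>2\<in>\<Theta>. \<theta>1 < \<theta>2 \<longrightarrow>
            measure_pmf.prob (P \<theta>2) {..x} < measure_pmf.prob (P \<theta>1) {..x})) \<and>
     \<comment> \<open>(A3) P_theta(X = x) differentiable in theta\<close>
     (\<forall>x\<in>\<X>. \<forall>\<theta>\<in>\<Theta>. (\<lambda>t. pmf (P t) x) differentiable (at \<theta>))"

text \<open>The class M_alpha of (non-randomised) two-sided intervals (L x, U x), with
  extended-real endpoints. (D3) is built in: the endpoints are functions of x only.\<close>

definition class_M :: "real set \<Rightarrow> int set \<Rightarrow> (real \<Rightarrow> int pmf) \<Rightarrow> real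
                        \<Rightarrow> (int \<Rightarrow> ereal) \<Rightarrow> (int \<Rightarrow> ereal) \<Rightarrow> bool" where
  "class_M \<Theta> \<X> P \<alpha> L U \<longleftrightarrow>
     \<comment> \<open>(D1)\<close>
     (\<forall>x. x \<in> \<X> \<and> x + 1 \<in> \<X> \<longrightarrow> L x \<le> L (x + 1) \<and> U x \<le> U (x + 1)) \<and>
     \<comment> \<open>(D2): inf over theta of the one-sided coverage probabilities is >= 1 - alpha/2\<close>
     (\<forall>\<theta>\<in>\<Theta>. measure_pmf.prob (P \<theta>) {x. L x \<le> ereal \<theta>} \<ge> 1 - \<alpha> / 2) \<and>
     (\<forall>\<theta>\<in>\<Theta>. measure_pmf.prob (P \<theta>) {x. U x \<ge> ereal \<theta>} \<ge> 1 - \<alpha> / 2)"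

text \<open>The fiducial interval: for x in X, the lower endpoint theta_L solves
  P_theta(X >= x) = alpha/2 and the upper endpoint theta_U solves P_theta(X <= x) = alpha/2.
  At the boundary of X (where no solution can exist) the endpoint is the
  corresponding end of Theta.\<close>

definition fiducial :: "real set \<Rightarrow> int set \<Rightarrow> (real \<Rightarrow> int pmf) \<Rightarrow> real
                        \<Rightarrow> (int \<Rightarrow> ereal) \<Rightarrow> (int \<Rightarrow> ereal) \<Rightarrow> bool" where
  "fiducial \<Theta> \<X> P \<alpha> Lf Uf \<longleftrightarrow>
     (\<forall>x\<in>\<X>.
        (if \<exists>y\<in>\<X>. y < x
         then (\<exists>\<theta>\<in>\<Theta>. Lf x = ereal \<theta> \<and> measure_pmf.prob (P \<theta>) {x..} = \<alpha> / 2)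
         else Lf x = Inf (ereal ` \<Theta>)) \<and>
        (if \<exists>y\<in>\<X>. x < y
         then (\<exists>\<theta>\<in>\<Theta>. Uf x = ereal \<theta> \<and> measure_pmf.prob (P \<theta>) {..x} = \<alpha> / 2)
         else Uf x = Sup (ereal ` \<Theta>)))"

definition ci_length :: "(int \<Rightarrow> ereal) \<Rightarrow> (int \<Rightarrow> ereal) \<Rightarrow> int \<Rightarrow> ereal" where
  "ci_length L U x = U x - L x"

definition expected_length :: "(real \<Rightarrow> int pmf) \<Rightarrow> (int \<Rightarrow> ereal) \<Rightarrow> (int \<Rightarrow> ereal) \<Rightarrow> real \<Rightarrow> ennreal" where
  "expected_length P L U \<theta> = (\<integral>\<^sup>+ k. e2ennreal (ci_length L U k) \<partial>measure_pmf (P \<theta>))"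

end

theory Submission
  imports Defs
begin

text \<open>By (A2) the tail probability \<open>P\<^sub>\<theta>(X \<ge> x)\<close> is strictly increasing in \<open>\<theta>\<close>, so the
  fiducial lower endpoint \<open>\<theta>\<^sub>L(x)\<close> is precisely where it crosses \<open>\<alpha>/2\<close>: below \<open>\<theta>\<^sub>L(x)\<close>
  the tail is smaller, above it larger (at the left end of the sample space it is 1).
  If a monotone lower bound \<open>L\<close> had \<open>L(x) > \<theta> > \<theta>\<^sub>L(x)\<close> for some \<open>\<theta>\<close>, then
  \<open>{L(X) \<le> \<theta>} \<subseteq> {X < x}\<close>, an event of probability \<open>1 - P\<^sub>\<theta>(X \<ge> x) < 1 - \<alpha>/2\<close>,
  violating coverage; hence \<open>L \<le> \<theta>\<^sub>L\<close>. Coverage of \<open>\<theta>\<^sub>L\<close> itself holds because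
  \<open>{\<theta>\<^sub>L(X) > \<theta>}\<close> lies in a union of tails \<open>{X \<ge> x}\<close> each of probability below \<open>\<alpha>/2\<close>,
  and such a union is an increasing limit of single tails. The upper endpoint is symmetric,
  and pointwise domination of the lengths gives domination of the expected lengths.\<close>

lemma measure_pmf_UN_atLeast_le:
  fixes p :: "int pmf"
  assumes "0 \<le> c" and tail: "\<And>x. x \<in> B \<Longrightarrow> measure_pmf.prob p {x..} \<le> c"
  shows "measure_pmf.prob p (\<Union>x\<in>B. {x..}) \<le> c"
proof -
  define S where "S = (\<Union>x\<in>B. {x..})"
  define A where "A n = S \<inter> {- int n..}" for n
  have "(\<lambda>n. measure_pmf.prob p (A n)) \<longlonglongrightarrow> measure_pmf.prob p (\<Union>n. A n)"
    by (rule Lim_measure_incseq) (auto simp: A_def incseq_def)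
  moreover have "(\<Union>n. A n) = S"
  proof -
    have "\<exists>n. z \<in> {- int n..}" for z :: int
      by (rule exI[of _ "nat \<bar>z\<bar>"]) simp
    then show ?thesis by (auto simp: A_def)
  qed
  moreover have "measure_pmf.prob p (A n) \<le> c" for n
    \<comment> \<open>the truncated up-set \<open>A n\<close> has a least element, and some \<open>x \<in> B\<close> lies below it\<close>
  proof (cases "A n = {}")
    case True
    then show ?thesis using assms(1) by simp
  next
    case False
    have ge: "- int n \<le> z" if "z \<in> A n" for z
      using that by (simp add: A_def)
    define k0 where "k0 = (LEAST k. - int n + int k \<in> A n)"
    obtain z0 where z0: "z0 \<in> A n" using False by blast
    then have "- int n + int (nat (z0 + int n)) \<in> A n" using ge[OF z0] by simp
    then have "- int n + int k0 \<in> A n" unfolding k0_def by (rule LeastI)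
    then obtain x where "x \<in> B" "x \<le> - int n + int k0"
      by (auto simp: A_def S_def)
    moreover have "A n \<subseteq> {- int n + int k0..}"
    proof
      fix z assume z: "z \<in> A n"
      then have "- int n + int (nat (z + int n)) \<in> A n" using ge[OF z] by simp
      then have "k0 \<le> nat (z + int n)" unfolding k0_def by (rule Least_le)
      then show "z \<in> {- int n + int k0..}" using ge[OF z] by simp
    qed
    ultimately have "A n \<subseteq> {x..}" by auto
    then have "measure_pmf.prob p (A n) \<le> measure_pmf.prob p {x..}"
      by (rule measure_pmf.finite_measure_mono) simp
    then show ?thesis using tail[OF \<open>x \<in> B\<close>] by simp
  qed
  ultimately show ?thesis
    unfolding S_def[symmetric] by (metis LIMSEQ_le_const2)
qed

lemma measure_pmf_UN_atMost_le:
  fixes p :: "int pmf"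
  assumes "0 \<le> c" and "\<And>x. x \<in> B \<Longrightarrow> measure_pmf.prob p {..x} \<le> c"
  shows "measure_pmf.prob p (\<Union>x\<in>B. {..x}) \<le> c"
proof -
  have "uminus -` (\<Union>x\<in>uminus ` B. {x..}) = (\<Union>x\<in>B. {..x::int})"
    by auto
  moreover have "measure_pmf.prob (map_pmf uminus p) {x..} \<le> c" if "x \<in> uminus ` B" for x
  proof -
    have "uminus -` {x..} = {..- x::int}" by auto
    then show ?thesis using that assms(2) by auto
  qed
  ultimately show ?thesis
    using measure_pmf_UN_atLeast_le[of c "uminus ` B" "map_pmf uminus p"] assms(1)
    by (simp only: measure_map_pmf)
qed

lemma measure_pmf_atMost_pred:
  fixes p :: "int pmf"
  shows "measure_pmf.prob p {..x - 1} = 1 - measure_pmf.prob p {x..}"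
proof -
  have "{..x - 1} = space (measure_pmf p) - {x..}" by auto
  then have "measure_pmf.prob p {..x - 1} = measure_pmf.prob p (space (measure_pmf p) - {x..})"
    by (rule arg_cong)
  also have "\<dots> = 1 - measure_pmf.prob p {x..}"
    by (rule measure_pmf.prob_compl) simp
  finally show ?thesis .
qed

lemma consecutive_ints_between:
  "consecutive_ints X \<Longrightarrow> a \<in> X \<Longrightarrow> b \<in> X \<Longrightarrow> a \<le> c \<Longrightarrow> c \<le> b \<Longrightarrow> c \<in> X"
  unfolding consecutive_ints_def by (meson atLeastAtMost_iff subsetD)

lemma consecutive_ints_step_mono:
  fixes f :: "int \<Rightarrow> 'b::order"
  assumes "consecutive_ints X"
    and step: "\<forall>x. x \<in> X \<and> x + 1 \<in> X \<longrightarrow> f x \<le> f (x + 1)"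
    and "x \<in> X" "y \<in> X" "x \<le> y"
  shows "f x \<le> f y"
  using \<open>x \<le> y\<close> \<open>y \<in> X\<close>
proof (induction y rule: int_ge_induct)
  case base
  then show ?case by simp
next
  case (step i)
  have "i \<in> X"
    using consecutive_ints_between[OF assms(1) \<open>x \<in> X\<close> step.prems] step.hyps by simp
  then have "f x \<le> f i" using step.IH by simp
  also have "f i \<le> f (i + 1)" using assms(2) \<open>i \<in> X\<close> step.prems by blast
  finally show ?case .
qed

lemma open_exists_between_above:
  assumes "open S" "t \<in> S" "a \<le> ereal t" "ereal t < b"
  shows "\<exists>s\<in>S. a < ereal s \<and> ereal s < b"
proof -
  obtain r where r: "t < r" "ereal r < b" using ereal_dense2[OF assms(4)] by auto
  obtain e where e: "e > 0" "ball t e \<subseteq> S" using assms(1,2) open_contains_ball by blast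
  define s where "s = min r (t + e / 2)"
  have "s \<in> ball t e" "t < s" using e r by (auto simp: s_def dist_real_def)
  moreover have "ereal s < b"
    using r unfolding s_def by (meson ereal_less_eq(3) min.cobounded1 le_less_trans)
  moreover have "a < ereal s" using assms(3) \<open>t < s\<close> by (simp add: le_less_trans)
  ultimately show ?thesis using e by blast
qed

lemma open_exists_between_below:
  assumes "open S" "t \<in> S" "ereal t \<le> a" "b < ereal t"
  shows "\<exists>s\<in>S. b < ereal s \<and> ereal s < a"
proof -
  obtain r where r: "r < t" "b < ereal r" using ereal_dense2[OF assms(4)] by auto
  obtain e where e: "e > 0" "ball t e \<subseteq> S" using assms(1,2) open_contains_ball by blast
  define s where "s = max r (t - e / 2)"
  have "s \<in> ball t e" "s < t" using e r by (auto simp: s_def dist_real_def)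
  moreover have "b < ereal s"
    using r unfolding s_def by (meson ereal_less_eq(3) max.cobounded1 less_le_trans)
  moreover have "ereal s < a" using less_le_trans[OF _ assms(3), of "ereal s"] \<open>s < t\<close> by simp
  ultimately show ?thesis using e by blast
qed

locale stochastically_increasing =
  fixes \<Theta> :: "real set" and X :: "int set" and P :: "real \<Rightarrow> int pmf"
  assumes open_parameters: "open \<Theta>"
    and consecutive: "consecutive_ints X"
    and support: "\<theta> \<in> \<Theta> \<Longrightarrow> set_pmf (P \<theta>) \<subseteq> X"
    and cdf_strict_antimono: "x \<in> X \<Longrightarrow> x + 1 \<in> X \<Longrightarrow> \<theta>1 \<in> \<Theta> \<Longrightarrow> \<theta>2 \<in> \<Theta> \<Longrightarrow> \<theta>1 < \<theta>2 \<Longrightarrow>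
      measure_pmf.prob (P \<theta>2) {..x} < measure_pmf.prob (P \<theta>1) {..x}"

lemma model_assumptions_stochastically_increasing:
  assumes "model_assumptions \<Theta> X P"
  shows "stochastically_increasing \<Theta> X P"
proof
  fix x \<theta>1 \<theta>2
  assume "x \<in> X" "x + 1 \<in> X" "\<theta>1 \<in> \<Theta>" "\<theta>2 \<in> \<Theta>" "\<theta>1 < \<theta>2"
  moreover have "\<exists>y\<in>X. x < y" using \<open>x + 1 \<in> X\<close> by force
  ultimately show "measure_pmf.prob (P \<theta>2) {..x} < measure_pmf.prob (P \<theta>1) {..x}"
    using assms unfolding model_assumptions_def by blast
qed (use assms in \<open>auto simp: model_assumptions_def\<close>)

context stochastically_increasing
begin

abbreviation pr :: "real \<Rightarrow> int set \<Rightarrow> real" where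
  "pr \<theta> A \<equiv> measure_pmf.prob (P \<theta>) A"

lemma prob_Int_sample_space: "\<theta> \<in> \<Theta> \<Longrightarrow> pr \<theta> (A \<inter> X) = pr \<theta> A"
  using support by (metis Int_assoc inf.absorb_iff2 measure_Int_set_pmf)

lemma tail_strict_mono:
  assumes "x - 1 \<in> X" "x \<in> X" "\<theta>1 \<in> \<Theta>" "\<theta>2 \<in> \<Theta>" "\<theta>1 < \<theta>2"
  shows "pr \<theta>1 {x..} < pr \<theta>2 {x..}"
proof -
  have "pr \<theta>2 {..x - 1} < pr \<theta>1 {..x - 1}"
    using cdf_strict_antimono[of "x - 1"] assms by simp
  then show ?thesis
    unfolding measure_pmf_atMost_pred by linarith
qed

lemma tail_at_minimum:
  assumes "\<theta> \<in> \<Theta>" "\<forall>y\<in>X. x \<le> y"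
  shows "pr \<theta> {x..} = 1"
  using prob_Int_sample_space[OF assms(1), of "{x..}"] prob_Int_sample_space[OF assms(1), of UNIV] assms(2)
  by (simp add: Int_absorb1 subset_eq)

lemma cdf_at_maximum:
  assumes "\<theta> \<in> \<Theta>" "\<forall>y\<in>X. y \<le> x"
  shows "pr \<theta> {..x} = 1"
  using prob_Int_sample_space[OF assms(1), of "{..x}"] prob_Int_sample_space[OF assms(1), of UNIV] assms(2)
  by (simp add: Int_absorb1 subset_eq)

end

locale fiducial_interval = stochastically_increasing +
  fixes \<alpha> :: real and Lf Uf :: "int \<Rightarrow> ereal"
  assumes alpha_pos: "0 < \<alpha>" and alpha_less_1: "\<alpha> < 1"
    and fiducial: "fiducial \<Theta> X P \<alpha> Lf Uf"
begin

lemma Lf_interior: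
  assumes "x \<in> X" "y \<in> X" "y < x"
  obtains \<theta>0 where "\<theta>0 \<in> \<Theta>" "Lf x = ereal \<theta>0" "pr \<theta>0 {x..} = \<alpha> / 2"
  using fiducial assms unfolding fiducial_def by (metis (no_types, lifting))

lemma Lf_boundary: "x \<in> X \<Longrightarrow> \<forall>y\<in>X. x \<le> y \<Longrightarrow> Lf x = Inf (ereal ` \<Theta>)"
  using fiducial unfolding fiducial_def by (meson not_less)

lemma Uf_interior:
  assumes "x \<in> X" "y \<in> X" "x < y"
  obtains \<theta>0 where "\<theta>0 \<in> \<Theta>" "Uf x = ereal \<theta>0" "pr \<theta>0 {..x} = \<alpha> / 2"
  using fiducial assms unfolding fiducial_def by (metis (no_types, lifting))

lemma Uf_boundary: "x \<in> X \<Longrightarrow> \<forall>y\<in>X. y \<le> x \<Longrightarrow> Uf x = Sup (ereal ` \<Theta>)"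
  using fiducial unfolding fiducial_def by (meson not_less)

lemma tail_less_if_below_Lf:
  assumes "\<theta> \<in> \<Theta>" "x \<in> X" "ereal \<theta> < Lf x"
  shows "pr \<theta> {x..} < \<alpha> / 2"
proof (cases "\<forall>y\<in>X. x \<le> y")
  case True
  then have "Lf x \<le> ereal \<theta>" using Lf_boundary assms(1,2) by (simp add: INF_lower)
  with assms(3) show ?thesis by simp
next
  case False
  then obtain y where "y \<in> X" "y < x" by auto
  then obtain \<theta>0 where \<theta>0: "\<theta>0 \<in> \<Theta>" "Lf x = ereal \<theta>0" "pr \<theta>0 {x..} = \<alpha> / 2"
    using Lf_interior assms(2) by blast
  have "x - 1 \<in> X"
    using consecutive_ints_between[OF consecutive \<open>y \<in> X\<close> assms(2)] \<open>y < x\<close> by simp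
  then show ?thesis
    using tail_strict_mono[of x \<theta> \<theta>0] assms \<theta>0 by simp
qed

lemma tail_greater_if_above_Lf:
  assumes "\<theta> \<in> \<Theta>" "x \<in> X" "Lf x < ereal \<theta>"
  shows "\<alpha> / 2 < pr \<theta> {x..}"
proof (cases "\<forall>y\<in>X. x \<le> y")
  case True
  then show ?thesis using tail_at_minimum assms(1) alpha_less_1 by simp
next
  case False
  then obtain y where "y \<in> X" "y < x" by auto
  then obtain \<theta>0 where \<theta>0: "\<theta>0 \<in> \<Theta>" "Lf x = ereal \<theta>0" "pr \<theta>0 {x..} = \<alpha> / 2"
    using Lf_interior assms(2) by blast
  have "x - 1 \<in> X"
    using consecutive_ints_between[OF consecutive \<open>y \<in> X\<close> assms(2)] \<open>y < x\<close> by simp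
  then show ?thesis
    using tail_strict_mono[of x \<theta>0 \<theta>] assms \<theta>0 by simp
qed

lemma cdf_less_if_above_Uf:
  assumes "\<theta> \<in> \<Theta>" "x \<in> X" "Uf x < ereal \<theta>"
  shows "pr \<theta> {..x} < \<alpha> / 2"
proof (cases "\<forall>y\<in>X. y \<le> x")
  case True
  then have "ereal \<theta> \<le> Uf x" using Uf_boundary assms(1,2) by (simp add: SUP_upper)
  with assms(3) show ?thesis by simp
next
  case False
  then obtain y where "y \<in> X" "x < y" by auto
  then obtain \<theta>0 where \<theta>0: "\<theta>0 \<in> \<Theta>" "Uf x = ereal \<theta>0" "pr \<theta>0 {..x} = \<alpha> / 2"
    using Uf_interior assms(2) by blast
  have "x + 1 \<in> X"
    using consecutive_ints_between[OF consecutive assms(2) \<open>y \<in> X\<close>] \<open>x < y\<close> by simp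
  then show ?thesis
    using cdf_strict_antimono[of x \<theta>0 \<theta>] assms \<theta>0 by simp
qed

lemma cdf_greater_if_below_Uf:
  assumes "\<theta> \<in> \<Theta>" "x \<in> X" "ereal \<theta> < Uf x"
  shows "\<alpha> / 2 < pr \<theta> {..x}"
proof (cases "\<forall>y\<in>X. y \<le> x")
  case True
  then show ?thesis using cdf_at_maximum assms(1) alpha_less_1 by simp
next
  case False
  then obtain y where "y \<in> X" "x < y" by auto
  then obtain \<theta>0 where \<theta>0: "\<theta>0 \<in> \<Theta>" "Uf x = ereal \<theta>0" "pr \<theta>0 {..x} = \<alpha> / 2"
    using Uf_interior assms(2) by blast
  have "x + 1 \<in> X"
    using consecutive_ints_between[OF consecutive assms(2) \<open>y \<in> X\<close>] \<open>x < y\<close> by simp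
  then show ?thesis
    using cdf_strict_antimono[of x \<theta> \<theta>0] assms \<theta>0 by simp
qed

lemma Lf_step_mono: "\<forall>x. x \<in> X \<and> x + 1 \<in> X \<longrightarrow> Lf x \<le> Lf (x + 1)"
proof (intro allI impI, rule ccontr)
  fix x assume "x \<in> X \<and> x + 1 \<in> X" and decrease: "\<not> Lf x \<le> Lf (x + 1)"
  then have x: "x + 1 \<in> X" "x \<in> X" "x < x + 1" by auto
  then obtain \<theta>0 where \<theta>0: "\<theta>0 \<in> \<Theta>" "Lf (x + 1) = ereal \<theta>0" "pr \<theta>0 {x + 1..} = \<alpha> / 2"
    by (rule Lf_interior)
  have "pr \<theta>0 {x..} < \<alpha> / 2"
    using tail_less_if_below_Lf[of \<theta>0 x] x \<theta>0 decrease by simp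
  moreover have "pr \<theta>0 {x + 1..} \<le> pr \<theta>0 {x..}"
    by (rule measure_pmf.finite_measure_mono) auto
  ultimately show False using \<theta>0(3) by simp
qed

lemma Uf_step_mono: "\<forall>x. x \<in> X \<and> x + 1 \<in> X \<longrightarrow> Uf x \<le> Uf (x + 1)"
proof (intro allI impI, rule ccontr)
  fix x assume "x \<in> X \<and> x + 1 \<in> X" and decrease: "\<not> Uf x \<le> Uf (x + 1)"
  then have x: "x \<in> X" "x + 1 \<in> X" "x < x + 1" by auto
  then obtain \<theta>0 where \<theta>0: "\<theta>0 \<in> \<Theta>" "Uf x = ereal \<theta>0" "pr \<theta>0 {..x} = \<alpha> / 2"
    by (rule Uf_interior)
  have "pr \<theta>0 {..x + 1} < \<alpha> / 2"
    using cdf_less_if_above_Uf[of \<theta>0 "x + 1"] x \<theta>0 decrease by simp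
  moreover have "pr \<theta>0 {..x} \<le> pr \<theta>0 {..x + 1}"
    by (rule measure_pmf.finite_measure_mono) auto
  ultimately show False using \<theta>0(3) by simp
qed

lemma Lf_coverage:
  assumes "\<theta> \<in> \<Theta>"
  shows "1 - \<alpha> / 2 \<le> pr \<theta> {x. Lf x \<le> ereal \<theta>}"
proof -
  define B where "B = {x \<in> X. ereal \<theta> < Lf x}"
  have "{x. ereal \<theta> < Lf x} \<inter> X = B" by (auto simp: B_def)
  then have "pr \<theta> {x. ereal \<theta> < Lf x} = pr \<theta> B"
    using prob_Int_sample_space[OF assms, of "{x. ereal \<theta> < Lf x}"] by simp
  also have "\<dots> \<le> pr \<theta> (\<Union>x\<in>B. {x..})"
    by (rule measure_pmf.finite_measure_mono) auto
  also have "\<dots> \<le> \<alpha> / 2"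
    using alpha_pos tail_less_if_below_Lf[OF assms]
    by (intro measure_pmf_UN_atLeast_le) (auto simp: B_def less_imp_le)
  finally have "pr \<theta> {x. ereal \<theta> < Lf x} \<le> \<alpha> / 2" .
  moreover have "pr \<theta> {x. Lf x \<le> ereal \<theta>} = pr \<theta> (space (measure_pmf (P \<theta>)) - {x. ereal \<theta> < Lf x})"
    by (rule arg_cong[where f = "pr \<theta>"]) auto
  moreover have "\<dots> = 1 - pr \<theta> {x. ereal \<theta> < Lf x}"
    by (rule measure_pmf.prob_compl) simp
  ultimately show ?thesis by linarith
qed

lemma Uf_coverage:
  assumes "\<theta> \<in> \<Theta>"
  shows "1 - \<alpha> / 2 \<le> pr \<theta> {x. ereal \<theta> \<le> Uf x}"
proof -
  define B where "B = {x \<in> X. Uf x < ereal \<theta>}"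
  have "{x. Uf x < ereal \<theta>} \<inter> X = B" by (auto simp: B_def)
  then have "pr \<theta> {x. Uf x < ereal \<theta>} = pr \<theta> B"
    using prob_Int_sample_space[OF assms, of "{x. Uf x < ereal \<theta>}"] by simp
  also have "\<dots> \<le> pr \<theta> (\<Union>x\<in>B. {..x})"
    by (rule measure_pmf.finite_measure_mono) auto
  also have "\<dots> \<le> \<alpha> / 2"
    using alpha_pos cdf_less_if_above_Uf[OF assms]
    by (intro measure_pmf_UN_atMost_le) (auto simp: B_def less_imp_le)
  finally have "pr \<theta> {x. Uf x < ereal \<theta>} \<le> \<alpha> / 2" .
  moreover have "pr \<theta> {x. ereal \<theta> \<le> Uf x} = pr \<theta> (space (measure_pmf (P \<theta>)) - {x. Uf x < ereal \<theta>})"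
    by (rule arg_cong[where f = "pr \<theta>"]) auto
  moreover have "\<dots> = 1 - pr \<theta> {x. Uf x < ereal \<theta>}"
    by (rule measure_pmf.prob_compl) simp
  ultimately show ?thesis by linarith
qed

lemma fiducial_in_class_M: "class_M \<Theta> X P \<alpha> Lf Uf"
proof -
  have "Lf x \<le> Lf (x + 1) \<and> Uf x \<le> Uf (x + 1)" if "x \<in> X \<and> x + 1 \<in> X" for x
    using that Lf_step_mono Uf_step_mono by blast
  then show ?thesis
    unfolding class_M_def using Lf_coverage Uf_coverage by blast
qed

lemma exists_parameter_between_Lf:
  assumes "x \<in> X" "Lf x < b"
  obtains \<theta> where "\<theta> \<in> \<Theta>" "Lf x < ereal \<theta>" "ereal \<theta> < b"
proof -
  obtain \<theta>0 where "\<theta>0 \<in> \<Theta>" "Lf x \<le> ereal \<theta>0" "ereal \<theta>0 < b"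
  proof (cases "\<forall>y\<in>X. x \<le> y")
    case True
    then have "Inf (ereal ` \<Theta>) < b" using Lf_boundary assms by simp
    then show ?thesis
      using that True Lf_boundary assms(1) by (auto simp: Inf_less_iff INF_lower)
  next
    case False
    then show ?thesis
      using that Lf_interior assms by (metis linorder_not_le order_refl)
  qed
  then show ?thesis
    using open_exists_between_above[OF open_parameters] that by blast
qed

lemma exists_parameter_between_Uf:
  assumes "x \<in> X" "b < Uf x"
  obtains \<theta> where "\<theta> \<in> \<Theta>" "b < ereal \<theta>" "ereal \<theta> < Uf x"
proof -
  obtain \<theta>0 where "\<theta>0 \<in> \<Theta>" "ereal \<theta>0 \<le> Uf x" "b < ereal \<theta>0"
  proof (cases "\<forall>y\<in>X. y \<le> x")
    case True
    then have "b < Sup (ereal ` \<Theta>)" using Uf_boundary assms by simp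
    then show ?thesis
      using that True Uf_boundary assms(1) by (auto simp: less_Sup_iff SUP_upper)
  next
    case False
    then show ?thesis
      using that Uf_interior assms by (metis linorder_not_le order_refl)
  qed
  then show ?thesis
    using open_exists_between_below[OF open_parameters] that by blast
qed

lemma lower_le_Lf:
  assumes "class_M \<Theta> X P \<alpha> L U" "x0 \<in> X"
  shows "L x0 \<le> Lf x0"
proof (rule ccontr)
  have L_step: "\<forall>x. x \<in> X \<and> x + 1 \<in> X \<longrightarrow> L x \<le> L (x + 1)"
    and L_coverage: "\<And>\<theta>. \<theta> \<in> \<Theta> \<Longrightarrow> 1 - \<alpha> / 2 \<le> pr \<theta> {x. L x \<le> ereal \<theta>}"
    using assms(1) unfolding class_M_def by auto
  assume "\<not> L x0 \<le> Lf x0"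
  then have "Lf x0 < L x0" by simp
  with assms(2) obtain \<theta> where \<theta>: "\<theta> \<in> \<Theta>" "Lf x0 < ereal \<theta>" "ereal \<theta> < L x0"
    by (rule exists_parameter_between_Lf)
  have below: "{x. L x \<le> ereal \<theta>} \<inter> X \<subseteq> {..x0 - 1}"
  proof
    fix z assume z: "z \<in> {x. L x \<le> ereal \<theta>} \<inter> X"
    have "\<not> x0 \<le> z"
    proof
      assume "x0 \<le> z"
      then have "L x0 \<le> L z"
        using consecutive_ints_step_mono[OF consecutive L_step assms(2)] z by blast
      then show False using z \<theta>(3) by auto
    qed
    then show "z \<in> {..x0 - 1}" by simp
  qed
  have "pr \<theta> {x. L x \<le> ereal \<theta>} = pr \<theta> ({x. L x \<le> ereal \<theta>} \<inter> X)"
    by (rule prob_Int_sample_space[OF \<theta>(1), symmetric])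
  also have "\<dots> \<le> pr \<theta> {..x0 - 1}"
    using below by (rule measure_pmf.finite_measure_mono) simp
  also have "\<dots> < 1 - \<alpha> / 2"
    using tail_greater_if_above_Lf[OF \<theta>(1) assms(2) \<theta>(2)] by (simp add: measure_pmf_atMost_pred)
  finally show False using L_coverage[OF \<theta>(1)] by simp
qed

lemma Uf_le_upper:
  assumes "class_M \<Theta> X P \<alpha> L U" "x0 \<in> X"
  shows "Uf x0 \<le> U x0"
proof (rule ccontr)
  have U_step: "\<forall>x. x \<in> X \<and> x + 1 \<in> X \<longrightarrow> U x \<le> U (x + 1)"
    and U_coverage: "\<And>\<theta>. \<theta> \<in> \<Theta> \<Longrightarrow> 1 - \<alpha> / 2 \<le> pr \<theta> {x. ereal \<theta> \<le> U x}"
    using assms(1) unfolding class_M_def by auto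
  assume "\<not> Uf x0 \<le> U x0"
  then have "U x0 < Uf x0" by simp
  with assms(2) obtain \<theta> where \<theta>: "\<theta> \<in> \<Theta>" "U x0 < ereal \<theta>" "ereal \<theta> < Uf x0"
    by (rule exists_parameter_between_Uf)
  have above: "{x. ereal \<theta> \<le> U x} \<inter> X \<subseteq> {x0 + 1..}"
  proof
    fix z assume z: "z \<in> {x. ereal \<theta> \<le> U x} \<inter> X"
    have "\<not> z \<le> x0"
    proof
      assume "z \<le> x0"
      then have "U z \<le> U x0"
        using consecutive_ints_step_mono[OF consecutive U_step _ assms(2)] z by blast
      then show False using z \<theta>(2) by auto
    qed
    then show "z \<in> {x0 + 1..}" by simp
  qed
  have "pr \<theta> {x. ereal \<theta> \<le> U x} = pr \<theta> ({x. ereal \<theta> \<le> U x} \<inter> X)"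
    by (rule prob_Int_sample_space[OF \<theta>(1), symmetric])
  also have "\<dots> \<le> pr \<theta> {x0 + 1..}"
    using above by (rule measure_pmf.finite_measure_mono) simp
  also have "\<dots> < 1 - \<alpha> / 2"
    using cdf_greater_if_below_Uf[OF \<theta>(1) assms(2) \<theta>(3)]
      measure_pmf_atMost_pred[of "P \<theta>" "x0 + 1"] by simp
  finally show False using U_coverage[OF \<theta>(1)] by simp
qed

lemma ci_length_fiducial_le:
  assumes "class_M \<Theta> X P \<alpha> L U" "x \<in> X"
  shows "ci_length Lf Uf x \<le> ci_length L U x"
  unfolding ci_length_def
  using Uf_le_upper[OF assms] lower_le_Lf[OF assms] by (rule ereal_minus_mono)

lemma expected_length_fiducial_le:
  assumes "class_M \<Theta> X P \<alpha> L U" "\<theta> \<in> \<Theta>"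
  shows "expected_length P Lf Uf \<theta> \<le> expected_length P L U \<theta>"
  unfolding expected_length_def
proof (rule nn_integral_mono_AE)
  show "AE x in measure_pmf (P \<theta>). e2ennreal (ci_length Lf Uf x) \<le> e2ennreal (ci_length L U x)"
    unfolding AE_measure_pmf_iff
    using support[OF assms(2)] ci_length_fiducial_le[OF assms(1)] by (auto intro: e2ennreal_mono)
qed

end

theorem proposition10:
  fixes \<Theta> :: "real set" and \<X> :: "int set" and P :: "real \<Rightarrow> int pmf" and \<alpha> :: real
    and Lf Uf :: "int \<Rightarrow> ereal"
  assumes "model_assumptions \<Theta> \<X> P"
    and "0 < \<alpha>" and "\<alpha> < 1"
    and "fiducial \<Theta> \<X> P \<alpha> Lf Uf"
  shows "class_M \<Theta> \<X> P \<alpha> Lf Uf \<and>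
         (\<forall>L U. class_M \<Theta> \<X> P \<alpha> L U \<longrightarrow>
            (\<forall>\<theta>\<in>\<Theta>. expected_length P Lf Uf \<theta> \<le> expected_length P L U \<theta>) \<and>
            (\<forall>x\<in>\<X>. ci_length Lf Uf x \<le> ci_length L U x))"
proof -
  interpret fiducial_interval \<Theta> \<X> P \<alpha> Lf Uf
    using model_assumptions_stochastically_increasing[OF assms(1)] assms(2-4)
    by (simp add: fiducial_interval_def fiducial_interval_axioms_def)
  show ?thesis
    using fiducial_in_class_M expected_length_fiducial_le ci_length_fiducial_le by blast
qed

end
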